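(* Let $n \geq 2$, let $k \geq 2$ be an integer and let $(M_1, \dots, M_k) \in \mathrm{GL}_n(\mathbb{R})^k$. The following are equivalent. \begin{enumerate} \item There do not exist nonzero vectors $\mathbf v_1, \dots, \mathbf v_k \in \mathbb{R}^n \setminus\{\mathbf 0\}$, each with rationally dependent components, such that $M_1 \mathbf v_1 = M_2 \mathbf v_2 = \dots = M_k \mathbf v_k$. \item For all $\mathbf g_1, \dots, \mathbf g_k \in \mathbb{R}^n$ and all $(M_1', \dots, M_k') \in \mathrm{GL}_n(\mathbb{R})^k$ such that $\pi_k(M_1', \dots, M_k') = \pi_k(M_1, \dots, M_k)$, the set \[ \bigcup_{i=1}^k \left(M_i' \cdot \mathbb{Z}^n + \mathbf g_i\right) \] is a dense forest. \end{enumerate}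
   Context: A vector $\mathbf v \in \mathbb{R}^n$ has rationally dependent components if there is $\mathbf q \in \mathbb{Z}^n \setminus \{\mathbf 0\}$ with $\mathbf q \cdot \mathbf v = 0$; otherwise it has rationally independent components. A set $F \subset \mathbb{R}^n$ is a dense forest if for every $\varepsilon > 0$ there exists $V(\varepsilon) > 0$ such that every line segment in $\mathbb{R}^n$ of length $V(\varepsilon)$ intersects $\bigcup_{\mathbf f \in F} B_2(\mathbf f, \varepsilon)$, where $B_2(\mathbf f, \varepsilon)$ is the open Euclidean ball of radius $\varepsilon$ centred at $\mathbf f$. Let $\mathcal{S}_n^k := \left(\mathbb{R}^* \backslash \mathrm{GL}_n(\mathbb{R}) / \mathrm{GL}_n(\mathbb{Q})\right)^k$, where $\mathbb{R}^*$ (nonzero reals) acts by left multiplication as homothetic matrices and $\mathrm{GL}_n(\mathbb{Q})$ acts by right multiplication, and let $\pi_k : \mathrm{GL}_n(\mathbb{R})^k \to \mathcal{S}_n^k$ be the canonical projection. Thus $\pi_k(M_1', \dots, M_k') = \pi_k(M_1, \dots, M_k)$ iff for each $i$ there are $c_i \in \mathbb{R}^*$ and $Q_i \in \mathrm{GL}_n(\mathbb{Q})$ with $M_i' = c_i M_i Q_i$. *)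

theory Defs
  imports "HOL-Analysis.Analysis"
begin

definition int_vec :: "real ^ 'n \<Rightarrow> bool" where
  "int_vec z \<longleftrightarrow> (\<forall>i. z $ i \<in> \<int>)"

definition rat_dependent :: "real ^ 'n \<Rightarrow> bool" where
  "rat_dependent v \<longleftrightarrow> (\<exists>q. int_vec q \<and> q \<noteq> 0 \<and> q \<bullet> v = 0)"

definition dense_forest :: "(real ^ 'n) set \<Rightarrow> bool" where
  "dense_forest F \<longleftrightarrow> (\<forall>\<epsilon>>0. \<exists>V>0. \<forall>a b. dist a b = V \<longrightarrow>
      (\<exists>x\<in>closed_segment a b. \<exists>f\<in>F. dist x f < \<epsilon>))"

definition shifted_lattice :: "real ^ 'n ^ 'n \<Rightarrow> real ^ 'n \<Rightarrow> (real ^ 'n) set" where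
  "shifted_lattice M g = {M *v z + g | z. int_vec z}"

definition rat_GL :: "real ^ 'n ^ 'n \<Rightarrow> bool" where
  "rat_GL Q \<longleftrightarrow> invertible Q \<and> (\<forall>i j. Q $ i $ j \<in> \<rat>)"

text \<open>pi_k(M') = pi_k(M) for k-tuples indexed by 0..k-1.\<close>
definition same_class :: "nat \<Rightarrow> (nat \<Rightarrow> real ^ 'n ^ 'n) \<Rightarrow> (nat \<Rightarrow> real ^ 'n ^ 'n) \<Rightarrow> bool" where
  "same_class k M' M \<longleftrightarrow> (\<forall>i<k. \<exists>c Q. c \<noteq> 0 \<and> rat_GL Q \<and> M' i = c *\<^sub>R (M i ** Q))"

end

theory Submission
  imports Defs "HOL-Analysis.Kronecker_Approximation_Theorem"
begin

text \<open>
  Write \<open>A\<^sub>i\<close> for the inverse of \<open>M\<^sub>i'\<close>. If no common vector \<open>M\<^sub>i v\<^sub>i\<close> with all \<open>v\<^sub>i\<close>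
  rationally dependent exists, then for every direction \<open>d\<close> some \<open>A\<^sub>i d\<close> is rationally
  independent, so by Kronecker's theorem every line in direction \<open>d\<close> comes \<open>\<epsilon>\<close>-close to
  \<open>M\<^sub>i' \<int>\<^sup>n + g\<^sub>i\<close> within a bounded parameter range; compactness of the unit sphere makes the
  bound uniform in \<open>d\<close>. Conversely, if \<open>M\<^sub>i v\<^sub>i = w\<close> with \<open>q\<^sub>i \<bullet> v\<^sub>i = 0\<close> for integer vectors
  \<open>q\<^sub>i \<noteq> 0\<close>, then \<open>M\<^sub>i \<int>\<^sup>n\<close> lies in the integer level sets of the covector \<open>c\<^sub>i = q\<^sub>i A\<^sub>i\<close>,
  all of which are parallel to \<open>w\<close>; a line in direction \<open>w\<close> on which every \<open>c\<^sub>i \<bullet> x\<close> is a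
  fixed non-integer stays at positive distance from the union of the lattices.
\<close>

lemma inj_components_if_not_rat_dependent:
  fixes u :: "real^'n"
  assumes "\<not> rat_dependent u"
  shows "inj (\<lambda>j. u $ j)"
proof (rule injI)
  fix i j assume eq: "u $ i = u $ j"
  show "i = j"
  proof (rule ccontr)
    assume ij: "i \<noteq> j"
    define q :: "real^'n" where "q = axis i 1 - axis j 1"
    have "int_vec q" by (auto simp: int_vec_def axis_def q_def)
    moreover have "q $ i = 1" using ij by (simp add: q_def axis_def)
    moreover have "q \<bullet> u = 0" using eq by (simp add: q_def inner_diff_left inner_axis')
    ultimately show False using assms by (auto simp: rat_dependent_def)
  qed
qed

lemma int_independent_components_if_not_rat_dependent:
  fixes u :: "real^'n"
  assumes "\<not> rat_dependent u"
  shows "module.independent (\<lambda>r. (*) (real_of_int r)) (range (\<lambda>j. u $ j))"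
proof -
  interpret Modules.module "(\<lambda>r. (*) (real_of_int r))"
    by (simp add: Modules.module.intro distrib_left mult.commute)
  show ?thesis
  proof
    assume "dependent (range (\<lambda>j. u $ j))"
    then obtain t c x0 where t: "finite t" "t \<subseteq> range (\<lambda>j. u $ j)"
      "(\<Sum>x\<in>t. real_of_int (c x) * x) = 0" "x0 \<in> t" "c x0 \<noteq> 0"
      by (auto simp: dependent_explicit)
    define q :: "real^'n" where "q = (\<chi> j. if u $ j \<in> t then of_int (c (u $ j)) else 0)"
    have "q \<bullet> u = (\<Sum>j\<in>UNIV. if u $ j \<in> t then of_int (c (u $ j)) * u $ j else 0)"
      by (auto simp: inner_vec_def q_def intro!: sum.cong)
    also have "\<dots> = (\<Sum>j\<in>{j. u $ j \<in> t}. of_int (c (u $ j)) * u $ j)"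
      by (simp add: sum.inter_filter[symmetric])
    also have "\<dots> = (\<Sum>x\<in>t. real_of_int (c x) * x)"
    proof (rule sum.reindex_bij_betw)
      show "bij_betw (\<lambda>j. u $ j) {j. u $ j \<in> t} t"
        using inj_components_if_not_rat_dependent[OF assms] t(2)
        unfolding bij_betw_def by (auto simp: inj_on_def image_iff)
    qed
    finally have "q \<bullet> u = 0" using t(3) by simp
    moreover from t(2,4) obtain j0 where "x0 = u $ j0" by auto
    then have "q \<noteq> 0" using t(4,5) by (auto simp: q_def vec_eq_iff)
    moreover have "int_vec q" by (auto simp: int_vec_def q_def)
    ultimately show False using assms by (auto simp: rat_dependent_def)
  qed
qed

lemma rat_dependentI_Rats:
  fixes q v :: "real^'n"
  assumes "\<And>i. q $ i \<in> \<rat>" "q \<noteq> 0" "q \<bullet> v = 0"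
  shows "rat_dependent v"
proof -
  have "\<exists>b::int. b > 0 \<and> of_int b * q $ i \<in> \<int>" for i
  proof -
    obtain a b where "q $ i = of_int a / of_int b" "b > 0"
      using Rats_cases'[OF assms(1)[of i]] by metis
    then show ?thesis by (metis Ints_of_int nonzero_mult_div_cancel_left of_int_0_less_iff
          less_irrefl times_divide_eq_right)
  qed
  then obtain b where b: "\<And>i. b i > (0::int) \<and> of_int (b i) * q $ i \<in> \<int>" by metis
  define D where "D = (\<Prod>i\<in>UNIV. b i)"
  have "int_vec (of_int D *\<^sub>R q)" unfolding int_vec_def
  proof
    fix i
    have "D = b i * (\<Prod>j\<in>UNIV - {i}. b j)" unfolding D_def by (rule prod.remove) auto
    then have "(of_int D *\<^sub>R q) $ i = of_int (\<Prod>j\<in>UNIV - {i}. b j) * (of_int (b i) * q $ i)"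
      by simp
    then show "(of_int D *\<^sub>R q) $ i \<in> \<int>" using b[of i] by (metis Ints_mult Ints_of_int)
  qed
  moreover have "D \<noteq> 0" using b by (simp add: D_def) (metis less_irrefl)
  then have "of_int D *\<^sub>R q \<noteq> 0" using assms(2) by simp
  moreover have "(of_int D *\<^sub>R q) \<bullet> v = 0" using assms(3) by simp
  ultimately show ?thesis by (auto simp: rat_dependent_def)
qed

lemma det_in_Rats:
  fixes A :: "real^'n^'n"
  assumes "\<And>i j. A $ i $ j \<in> \<rat>"
  shows "det A \<in> \<rat>"
  unfolding det_def using assms by (intro Rats_sum Rats_mult Rats_prod) auto

lemma rat_dependent_rat_GL_mult:
  fixes Q :: "real^'n^'n" and v :: "real^'n"
  assumes Q: "rat_GL Q" and v: "rat_dependent v"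
  shows "rat_dependent (Q *v v)"
proof -
  from v obtain q where q: "int_vec q" "q \<noteq> 0" "q \<bullet> v = 0" by (auto simp: rat_dependent_def)
  have det: "det (transpose Q) \<noteq> 0" using Q by (simp add: rat_GL_def invertible_det_nz)
  \<comment> \<open>Cramer's rule solves \<open>Q\<^sup>T y = q\<close> with rational \<open>y\<close>\<close>
  define y :: "real^'n" where
    "y = (\<chi> k. det (\<chi> i j. if j = k then q $ i else transpose Q $ i $ j) / det (transpose Q))"
  have Qy: "transpose Q *v y = q" using cramer[OF det, of y q] by (simp add: y_def)
  have "y $ i \<in> \<rat>" for i
  proof -
    have "q $ j \<in> \<rat>" for j using q(1) by (auto simp: int_vec_def Ints_subset_Rats[THEN subsetD])
    moreover have "Q $ i $ j \<in> \<rat>" for i j using Q by (simp add: rat_GL_def)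
    ultimately show ?thesis unfolding y_def
      by (auto intro!: Rats_divide det_in_Rats simp: transpose_def)
  qed
  moreover have "y \<noteq> 0" using Qy q(2) by auto
  moreover have "y \<bullet> (Q *v v) = 0" using q(3) Qy by (simp add: dot_lmul_matrix[symmetric])
  ultimately show ?thesis by (rule rat_dependentI_Rats)
qed

lemma rat_dependent_scaleR:
  assumes "rat_dependent (v::real^'n)"
  shows "rat_dependent (c *\<^sub>R v)"
  using assms by (auto simp: rat_dependent_def)

lemma kronecker_approx_vec:
  fixes u \<alpha> :: "real^'n"
  assumes "\<not> rat_dependent u" "e > 0"
  obtains t z where "int_vec z" "norm (t *\<^sub>R u - z - \<alpha>) < e"
proof -
  define N where "N = CARD('n)"
  obtain h where h: "bij_betw h {..<N} (UNIV::'n set)"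
    using ex_bij_betw_nat_finite[of "UNIV::'n set"] by (auto simp: N_def atLeast0LessThan)
  have "(\<lambda>i. u $ h i) ` {..<N} = range (\<lambda>j. u $ j)"
    using h by (metis bij_betw_imp_surj_on image_image)
  then have indep: "module.independent (\<lambda>r. (*) (real_of_int r)) ((\<lambda>i. u $ h i) ` {..<N})"
    using int_independent_components_if_not_rat_dependent[OF assms(1)] by simp
  have inj: "inj_on (\<lambda>i. u $ h i) {..<N}"
    using inj_components_if_not_rat_dependent[OF assms(1)] h
    unfolding bij_betw_def inj_on_def inj_def by blast
  have N: "N > 0" by (simp add: N_def)
  obtain t m where tm: "\<And>i. i < N \<Longrightarrow> \<bar>t * u $ h i - of_int (m i) - \<alpha> $ h i\<bar> < e / N"
    using Kronecker_thm_1[OF indep inj, of "e / N" "\<lambda>i. \<alpha> $ h i"] N assms(2) by auto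
  define z :: "real^'n" where "z = (\<chi> j. of_int (m (inv_into {..<N} h j)))"
  have component: "\<bar>(t *\<^sub>R u - z - \<alpha>) $ j\<bar> < e / N" for j
  proof -
    define i where "i = inv_into {..<N} h j"
    have "i < N" "h i = j" using h unfolding i_def
      by (metis bij_betw_def f_inv_into_f inv_into_into lessThan_iff UNIV_I)+
    then show ?thesis using tm[of i] by (simp add: z_def i_def[symmetric])
  qed
  have "norm (t *\<^sub>R u - z - \<alpha>) \<le> (\<Sum>j\<in>UNIV. \<bar>(t *\<^sub>R u - z - \<alpha>) $ j\<bar>)"
    by (rule norm_le_l1_cart)
  also have "\<dots> < (\<Sum>j\<in>(UNIV::'n set). e / N)"
    by (rule sum_strict_mono) (use component in auto)
  also have "\<dots> = e" using N by (simp add: N_def)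
  finally show ?thesis using that[of z] by (simp add: int_vec_def z_def)
qed

lemma kronecker_approx_vec_uniform:
  fixes u :: "real^'n"
  assumes "\<not> rat_dependent u" "e > 0"
  obtains T where "\<And>\<alpha>. \<exists>t z. \<bar>t\<bar> \<le> T \<and> int_vec z \<and> norm (t *\<^sub>R u - z - \<alpha>) < e"
proof -
  have "\<forall>\<beta>. \<exists>t z. int_vec z \<and> norm (t *\<^sub>R u - z - \<beta>) < e/2"
    using kronecker_approx_vec[OF assms(1)] assms(2) by (metis half_gt_zero)
  then obtain tf zf where tz: "\<And>\<beta>. int_vec (zf \<beta>) \<and> norm (tf \<beta> *\<^sub>R u - zf \<beta> - \<beta>) < e/2"
    by metis
  \<comment> \<open>\<open>\<alpha>\<close> modulo \<open>\<int>\<^sup>n\<close> lies in the unit cube, which finitely many balls of radius \<open>e/2\<close> cover\<close>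
  define K where "K = cbox (0::real^'n) 1"
  have "K \<subseteq> (\<Union>\<beta>\<in>K. ball \<beta> (e/2))" using assms(2) by auto
  then obtain C where C: "finite C" "K \<subseteq> (\<Union>\<beta>\<in>C. ball \<beta> (e/2))"
    using compactE_image[of K K "\<lambda>\<beta>. ball \<beta> (e/2)"] unfolding K_def
    by (metis compact_cbox open_ball)
  show ?thesis
  proof (rule that)
    fix \<alpha> :: "real^'n"
    define fl :: "real^'n" where "fl = (\<chi> i. of_int \<lfloor>\<alpha> $ i\<rfloor>)"
    have "\<alpha> - fl \<in> K" unfolding K_def mem_box_cart by (auto simp: fl_def) linarith
    then obtain \<beta> where \<beta>: "\<beta> \<in> C" "dist \<beta> (\<alpha> - fl) < e/2" using C(2) by auto
    have "\<bar>tf \<beta>\<bar> \<le> (\<Sum>\<beta>\<in>C. \<bar>tf \<beta>\<bar>)" by (rule member_le_sum) (use \<beta> C in auto)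
    moreover have "int_vec (zf \<beta> - fl)" using tz[of \<beta>] by (auto simp: int_vec_def fl_def)
    moreover have "norm (tf \<beta> *\<^sub>R u - (zf \<beta> - fl) - \<alpha>) < e"
    proof -
      have "tf \<beta> *\<^sub>R u - (zf \<beta> - fl) - \<alpha> = (tf \<beta> *\<^sub>R u - zf \<beta> - \<beta>) + (\<beta> - (\<alpha> - fl))"
        by (simp add: algebra_simps)
      then show ?thesis using tz[of \<beta>] \<beta>(2) norm_triangle_lt
        by (metis dist_norm field_sum_of_halves add_strict_mono)
    qed
    ultimately show "\<exists>t z. \<bar>t\<bar> \<le> (\<Sum>\<beta>\<in>C. \<bar>tf \<beta>\<bar>) \<and> int_vec z \<and> norm (t *\<^sub>R u - z - \<alpha>) < e"
      by blast
  qed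
qed

lemma kronecker_approx_vec_local:
  fixes u :: "real^'n"
  assumes "\<not> rat_dependent u" "e > 0"
  obtains r T where "r > 0"
    "\<And>u' \<alpha>. u' \<in> ball u r \<Longrightarrow> \<exists>t z. \<bar>t\<bar> \<le> T \<and> int_vec z \<and> norm (t *\<^sub>R u' - z - \<alpha>) < e"
proof -
  obtain T where T: "\<And>\<alpha>. \<exists>t z. \<bar>t\<bar> \<le> T \<and> int_vec z \<and> norm (t *\<^sub>R u - z - \<alpha>) < e/2"
    using kronecker_approx_vec_uniform[OF assms(1), of "e/2"] assms(2) by (metis half_gt_zero)
  have T0: "T \<ge> 0" using T[of 0] by force
  define r where "r = e / (2 * (T + 1))"
  show ?thesis
  proof (rule that)
    show "r > 0" using assms(2) T0 by (simp add: r_def)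
    fix u' \<alpha> :: "real^'n" assume u': "u' \<in> ball u r"
    obtain t z where tz: "\<bar>t\<bar> \<le> T" "int_vec z" "norm (t *\<^sub>R u - z - \<alpha>) < e/2"
      using T by blast
    have "norm (t *\<^sub>R (u' - u)) = \<bar>t\<bar> * dist u u'" by (simp add: dist_norm norm_minus_commute)
    also have "\<dots> \<le> T * r" using tz(1) u' by (intro mult_mono) auto
    also have "\<dots> < e/2" using assms(2) T0 by (simp add: r_def field_simps)
    finally have "norm (t *\<^sub>R (u' - u)) < e/2" .
    moreover have "t *\<^sub>R u' - z - \<alpha> = (t *\<^sub>R u - z - \<alpha>) + t *\<^sub>R (u' - u)"
      by (simp add: algebra_simps)
    ultimately have "norm (t *\<^sub>R u' - z - \<alpha>) < e"
      using tz(3) norm_triangle_lt by (metis add_strict_mono field_sum_of_halves)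
    then show "\<exists>t z. \<bar>t\<bar> \<le> T \<and> int_vec z \<and> norm (t *\<^sub>R u' - z - \<alpha>) < e"
      using tz(1,2) by blast
  qed
qed

lemma shifted_lattice_near_lines:
  fixes M A :: "real^'n^'n" and d g :: "real^'n"
  assumes MA: "M ** A = mat 1" and indep: "\<not> rat_dependent (A *v d)" and "\<epsilon> > 0"
  obtains r T where "r > 0"
    "\<And>d' m. d' \<in> ball d r \<Longrightarrow> \<exists>t. \<bar>t\<bar> \<le> T \<and> (\<exists>f\<in>shifted_lattice M g. dist (m + t *\<^sub>R d') f < \<epsilon>)"
proof -
  obtain KM where KM: "KM > 0" "\<And>x. norm (M *v x) \<le> norm x * KM"
    using bounded_linear.pos_bounded[OF matrix_vector_mul_bounded_linear[of M]] by blast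
  obtain KA where KA: "KA > 0" "\<And>x. norm (A *v x) \<le> norm x * KA"
    using bounded_linear.pos_bounded[OF matrix_vector_mul_bounded_linear[of A]] by blast
  have "\<epsilon> / KM > 0" using KM(1) assms(3) by simp
  then obtain r T where rT: "r > 0" "\<And>u' \<alpha>. u' \<in> ball (A *v d) r \<Longrightarrow>
      \<exists>t z. \<bar>t\<bar> \<le> T \<and> int_vec z \<and> norm (t *\<^sub>R u' - z - \<alpha>) < \<epsilon> / KM"
    using kronecker_approx_vec_local[OF indep] by blast
  show ?thesis
  proof (rule that)
    show "r / KA > 0" using rT(1) KA(1) by simp
    fix d' m :: "real^'n" assume d': "d' \<in> ball d (r / KA)"
    have "dist (A *v d) (A *v d') \<le> dist d d' * KA"
      using KA(2)[of "d - d'"] by (simp add: dist_norm matrix_vector_mult_diff_distrib)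
    also have "\<dots> < r" using d' KA(1) by (simp add: pos_less_divide_eq)
    finally obtain t z where tz: "\<bar>t\<bar> \<le> T" "int_vec z"
      "norm (t *\<^sub>R (A *v d') - z - A *v (g - m)) < \<epsilon> / KM"
      using rT(2) by (metis mem_ball)
    have "m + t *\<^sub>R d' - (M *v z + g) = M *v (t *\<^sub>R (A *v d') - z - A *v (g - m))"
      by (simp add: matrix_vector_mult_diff_distrib matrix_vector_mul_assoc MA algebra_simps)
    then have "dist (m + t *\<^sub>R d') (M *v z + g) \<le> norm (t *\<^sub>R (A *v d') - z - A *v (g - m)) * KM"
      by (metis KM(2) dist_norm)
    also have "\<dots> < \<epsilon>" using tz(3) KM(1) by (simp add: pos_less_divide_eq)
    finally show "\<exists>t. \<bar>t\<bar> \<le> T \<and> (\<exists>f\<in>shifted_lattice M g. dist (m + t *\<^sub>R d') f < \<epsilon>)"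
      using tz(1,2) by (auto simp: shifted_lattice_def)
  qed
qed

lemma compact_uniform_bound:
  fixes S :: "'a::metric_space set" and P :: "real \<Rightarrow> 'a \<Rightarrow> bool"
  assumes "compact S"
    and locally: "\<And>x. x \<in> S \<Longrightarrow> \<exists>r>0. \<exists>T. \<forall>y\<in>ball x r. P T y"
    and mono: "\<And>T T' y. P T y \<Longrightarrow> T \<le> T' \<Longrightarrow> P T' y"
  obtains T where "\<And>y. y \<in> S \<Longrightarrow> P T y"
proof -
  obtain r T where rT: "\<And>x. x \<in> S \<Longrightarrow> r x > 0 \<and> (\<forall>y\<in>ball x (r x). P (T x) y)"
    using locally by metis
  have "S \<subseteq> (\<Union>x\<in>S. ball x (r x))" using rT by force
  then obtain C where C: "C \<subseteq> S" "finite C" "S \<subseteq> (\<Union>x\<in>C. ball x (r x))"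
    using compactE_image[OF \<open>compact S\<close>, of S "\<lambda>x. ball x (r x)"] by auto
  show ?thesis
  proof (rule that)
    fix y assume "y \<in> S"
    then obtain x where x: "x \<in> C" "y \<in> ball x (r x)" using C(3) by auto
    have "T x \<le> (\<Sum>x\<in>C. \<bar>T x\<bar>)"
      using member_le_sum[of x C "\<lambda>x. \<bar>T x\<bar>"] x(1) C(2) by simp
    then show "P (\<Sum>x\<in>C. \<bar>T x\<bar>) y" using mono rT x C(1) by blast
  qed
qed

lemma dense_forestI_lines:
  fixes F :: "(real^'n) set"
  assumes "\<And>\<epsilon>. \<epsilon> > 0 \<Longrightarrow>
    \<exists>T. \<forall>d\<in>sphere 0 1. \<forall>m. \<exists>t. \<bar>t\<bar> \<le> T \<and> (\<exists>f\<in>F. dist (m + t *\<^sub>R d) f < \<epsilon>)"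
  shows "dense_forest F"
  unfolding dense_forest_def
proof (intro allI impI)
  fix \<epsilon> :: real assume "\<epsilon> > 0"
  then obtain T where T: "\<And>d m. d \<in> sphere 0 1 \<Longrightarrow> \<exists>t. \<bar>t\<bar> \<le> T \<and> (\<exists>f\<in>F. dist (m + t *\<^sub>R d) f < \<epsilon>)"
    using assms by blast
  define V where "V = 2 * \<bar>T\<bar> + 1"
  have V: "V > 0" by (simp add: V_def add_nonneg_pos)
  show "\<exists>V>0. \<forall>a b. dist a b = V \<longrightarrow> (\<exists>x\<in>closed_segment a b. \<exists>f\<in>F. dist x f < \<epsilon>)"
  proof (intro exI[of _ V] conjI V allI impI)
    fix a b :: "real^'n" assume ab: "dist a b = V"
    \<comment> \<open>from the midpoint, parameters \<open>\<bar>t\<bar> \<le> T < V/2\<close> along the unit direction stay on the segment\<close>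
    have "(1/V) *\<^sub>R (b - a) \<in> sphere 0 1" using ab V by (simp add: dist_norm norm_minus_commute)
    then obtain t f where tf: "\<bar>t\<bar> \<le> T" "f \<in> F"
      "dist ((1/2) *\<^sub>R (a + b) + t *\<^sub>R ((1/V) *\<^sub>R (b - a))) f < \<epsilon>"
      using T by blast
    define u where "u = 1/2 + t / V"
    have "0 \<le> u" "u \<le> 1" using tf(1) V by (auto simp: u_def V_def field_simps abs_le_iff)
    moreover have "(1/2) *\<^sub>R (a + b) + t *\<^sub>R ((1/V) *\<^sub>R (b - a)) = (1 - u) *\<^sub>R a + u *\<^sub>R b"
      using V by (simp add: u_def vec_eq_iff field_simps)
    ultimately show "\<exists>x\<in>closed_segment a b. \<exists>f\<in>F. dist x f < \<epsilon>"
      using tf(2,3) unfolding closed_segment_def by force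
  qed
qed

lemma dense_forest_shifted_lattices:
  fixes M A :: "nat \<Rightarrow> real^'n^'n" and g :: "nat \<Rightarrow> real^'n"
  assumes MA: "\<And>i. i < k \<Longrightarrow> M i ** A i = mat 1"
    and indep: "\<And>d. d \<noteq> 0 \<Longrightarrow> \<exists>i<k. \<not> rat_dependent (A i *v d)"
  shows "dense_forest (\<Union>i<k. shifted_lattice (M i) (g i))"
proof (rule dense_forestI_lines)
  fix \<epsilon> :: real assume "\<epsilon> > 0"
  let ?F = "\<Union>i<k. shifted_lattice (M i) (g i)"
  let ?P = "\<lambda>T d'. \<forall>m. \<exists>t. \<bar>t\<bar> \<le> T \<and> (\<exists>f\<in>?F. dist (m + t *\<^sub>R d') f < \<epsilon>)"
  have locally: "\<exists>r>0. \<exists>T. \<forall>d'\<in>ball d r. ?P T d'" if "d \<in> sphere 0 1" for d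
  proof -
    from that have "d \<noteq> 0" by auto
    then obtain i where i: "i < k" "\<not> rat_dependent (A i *v d)" using indep by blast
    obtain r T where rT: "r > 0" "\<And>d' m. d' \<in> ball d r \<Longrightarrow>
        \<exists>t. \<bar>t\<bar> \<le> T \<and> (\<exists>f\<in>shifted_lattice (M i) (g i). dist (m + t *\<^sub>R d') f < \<epsilon>)"
      using shifted_lattice_near_lines[OF MA[OF i(1)] i(2) \<open>\<epsilon> > 0\<close>] by blast
    have "?P T d'" if d': "d' \<in> ball d r" for d'
    proof
      fix m
      obtain t f where "\<bar>t\<bar> \<le> T" "f \<in> shifted_lattice (M i) (g i)" "dist (m + t *\<^sub>R d') f < \<epsilon>"
        using rT(2)[OF d'] by blast
      then show "\<exists>t. \<bar>t\<bar> \<le> T \<and> (\<exists>f\<in>?F. dist (m + t *\<^sub>R d') f < \<epsilon>)"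
        using i(1) by blast
    qed
    then show ?thesis using rT(1) by blast
  qed
  obtain T where "\<And>d. d \<in> sphere 0 1 \<Longrightarrow> ?P T d"
  proof (rule compact_uniform_bound[of "sphere 0 1" ?P])
    show "\<exists>r>0. \<exists>T. \<forall>d'\<in>ball d r. ?P T d'" if "d \<in> sphere 0 1" for d
      using that by (rule locally)
    show "?P T' d'" if "?P T d'" "T \<le> T'" for T T' d'
      using that by (meson order.trans)
  qed (simp, blast)
  then show "\<exists>T. \<forall>d\<in>sphere 0 1. ?P T d" by blast
qed

lemma rat_dependent_preimage_scaled_rat_GL:
  fixes M Q A :: "real^'n^'n"
  assumes "rat_GL Q" and "(c *\<^sub>R (M ** Q)) ** A = mat 1" and "rat_dependent (A *v d)"
  shows "\<exists>v. M *v v = d \<and> rat_dependent v"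
proof (intro exI conjI)
  have "M *v (c *\<^sub>R (Q *v (A *v d))) = c *\<^sub>R ((M ** Q) *v (A *v d))"
    unfolding matrix_vector_mult_scaleR matrix_vector_mul_assoc[of M Q] ..
  also have "\<dots> = (c *\<^sub>R (M ** Q)) *v (A *v d)"
    by (rule scaleR_matrix_vector_assoc)
  also have "\<dots> = ((c *\<^sub>R (M ** Q)) ** A) *v d"
    by (rule matrix_vector_mul_assoc)
  finally show "M *v (c *\<^sub>R (Q *v (A *v d))) = d" using assms(2) by simp
  show "rat_dependent (c *\<^sub>R (Q *v (A *v d)))"
    using rat_dependent_scaleR[OF rat_dependent_rat_GL_mult[OF assms(1,3)]] .
qed

lemma dense_forest_if_no_common_rat_dependent:
  fixes M M' :: "nat \<Rightarrow> real^'n^'n" and g :: "nat \<Rightarrow> real^'n"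
  assumes none: "\<not> (\<exists>v. (\<forall>i<k. v i \<noteq> 0 \<and> rat_dependent (v i)) \<and>
                       (\<forall>i<k. \<forall>j<k. M i *v v i = M j *v v j))"
    and inv: "\<forall>i<k. invertible (M' i)" and same: "same_class k M' M"
  shows "dense_forest (\<Union>i<k. shifted_lattice (M' i) (g i))"
proof -
  have "\<forall>i. \<exists>A. i < k \<longrightarrow> M' i ** A = mat 1" using inv by (meson invertible_def)
  then obtain A where A: "\<And>i. i < k \<Longrightarrow> M' i ** A i = mat 1" by metis
  have "\<forall>i. \<exists>c Q. i < k \<longrightarrow> rat_GL Q \<and> M' i = c *\<^sub>R (M i ** Q)"
    using same unfolding same_class_def by blast
  then obtain c Q where cQ: "\<And>i. i < k \<Longrightarrow> rat_GL (Q i) \<and> M' i = c i *\<^sub>R (M i ** Q i)"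
    by metis
  show ?thesis
  proof (rule dense_forest_shifted_lattices[OF A])
    fix d :: "real^'n" assume "d \<noteq> 0"
    show "\<exists>i<k. \<not> rat_dependent (A i *v d)"
    proof (rule ccontr)
      assume "\<not> (\<exists>i<k. \<not> rat_dependent (A i *v d))"
      then have "\<exists>v. M i *v v = d \<and> rat_dependent v" if "i < k" for i
        using that cQ[OF that] A[OF that] by (intro rat_dependent_preimage_scaled_rat_GL) auto
      then have "\<forall>i. \<exists>v. i < k \<longrightarrow> M i *v v = d \<and> rat_dependent v" by blast
      then obtain v where v: "\<And>i. i < k \<Longrightarrow> M i *v v i = d \<and> rat_dependent (v i)" by metis
      have "v i \<noteq> 0" if "i < k" for i using v[OF that] \<open>d \<noteq> 0\<close> by auto
      then have "(\<forall>i<k. v i \<noteq> 0 \<and> rat_dependent (v i)) \<and> (\<forall>i<k. \<forall>j<k. M i *v v i = M j *v v j)"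
        using v by simp
      then show False using none by blast
    qed
  qed
qed

lemma interior_Union_hyperplanes_empty:
  fixes C :: "'a::euclidean_space set"
  assumes "finite C" "0 \<notin> C"
  shows "interior (\<Union>c\<in>C. {x. c \<bullet> x = 0}) = {}"
  using assms
proof (induction C rule: finite_induct)
  case empty
  then show ?case by simp
next
  case (insert c C)
  have "closed (\<Union>c\<in>C. {x. c \<bullet> x = 0})"
    using insert.hyps(1) by (intro closed_UN) (auto intro: closed_hyperplane)
  moreover have "(\<Union>c\<in>insert c C. {x. c \<bullet> x = 0}) = (\<Union>c\<in>C. {x. c \<bullet> x = 0}) \<union> {x. c \<bullet> x = 0}"
    by auto
  ultimately show ?case
    using interior_closed_Un_empty_interior[of _ "{x. c \<bullet> x = 0}"] insert by simp
qed

lemma exists_small_nonzero_inner: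
  fixes C :: "'a::euclidean_space set"
  assumes "finite C" "0 \<notin> C"
  obtains p where "\<And>c. c \<in> C \<Longrightarrow> 0 < \<bar>c \<bullet> p\<bar> \<and> \<bar>c \<bullet> p\<bar> \<le> 1/2"
proof -
  have "(\<Union>c\<in>C. {x. c \<bullet> x = 0}) \<noteq> UNIV"
    using interior_Union_hyperplanes_empty[OF assms] by (metis interior_UNIV empty_not_UNIV)
  then obtain p0 where p0: "\<And>c. c \<in> C \<Longrightarrow> c \<bullet> p0 \<noteq> 0" by blast
  define B where "B = (\<Sum>c\<in>C. \<bar>c \<bullet> p0\<bar>) + 1"
  have B: "\<bar>c \<bullet> p0\<bar> < B" if "c \<in> C" for c
    using member_le_sum[of c C "\<lambda>c. \<bar>c \<bullet> p0\<bar>"] that assms(1) by (simp add: B_def)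
  have "B > 0" by (simp add: B_def sum_nonneg add_nonneg_pos)
  show ?thesis
  proof (rule that[of "(1 / (2 * B)) *\<^sub>R p0"])
    fix c assume "c \<in> C"
    then show "0 < \<bar>c \<bullet> (1 / (2 * B)) *\<^sub>R p0\<bar> \<and> \<bar>c \<bullet> (1 / (2 * B)) *\<^sub>R p0\<bar> \<le> 1/2"
      using p0[OF \<open>c \<in> C\<close>] B[OF \<open>c \<in> C\<close>] \<open>B > 0\<close> by (auto simp: abs_mult field_simps)
  qed
qed

lemma dense_forest_line_approach:
  fixes F :: "(real^'n) set"
  assumes "dense_forest F" "w \<noteq> 0" "\<epsilon> > 0"
  obtains t f where "f \<in> F" "dist (p + t *\<^sub>R w) f < \<epsilon>"
proof -
  obtain V where V: "V > 0" "\<And>a b. dist a b = V \<Longrightarrow> \<exists>x\<in>closed_segment a b. \<exists>f\<in>F. dist x f < \<epsilon>"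
    using assms(1,3) unfolding dense_forest_def by blast
  have "dist p (p + (V / norm w) *\<^sub>R w) = V" using V(1) assms(2) by (simp add: dist_norm)
  then obtain x f where "x \<in> closed_segment p (p + (V / norm w) *\<^sub>R w)" "f \<in> F" "dist x f < \<epsilon>"
    using V(2) by blast
  moreover from this(1) obtain u where "x = p + (u * (V / norm w)) *\<^sub>R w"
    by (auto simp: closed_segment_def algebra_simps)
  ultimately show ?thesis using that by blast
qed

lemma not_dense_forest_in_int_level_sets:
  fixes C F :: "(real^'n) set"
  assumes C: "finite C" "0 \<notin> C" and w: "w \<noteq> 0" "\<And>c. c \<in> C \<Longrightarrow> c \<bullet> w = 0"
    and F: "F \<subseteq> (\<Union>c\<in>C. {x. c \<bullet> x \<in> \<int>})"
  shows "\<not> dense_forest F"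
proof
  assume forest: "dense_forest F"
  obtain p where p: "\<And>c. c \<in> C \<Longrightarrow> 0 < \<bar>c \<bullet> p\<bar> \<and> \<bar>c \<bullet> p\<bar> \<le> 1/2"
    using exists_small_nonzero_inner[OF C] by blast
  define \<epsilon> where "\<epsilon> = Min (insert 1 ((\<lambda>c. \<bar>c \<bullet> p\<bar> / norm c) ` C))"
  have "\<epsilon> > 0" using C p by (auto simp: \<epsilon>_def intro!: divide_pos_pos)
  then obtain t f where f: "f \<in> F" "dist (p + t *\<^sub>R w) f < \<epsilon>"
    using dense_forest_line_approach[OF forest w(1)] by blast
  then obtain c where c: "c \<in> C" "c \<bullet> f \<in> \<int>" using F by blast
  have "c \<noteq> 0" using C(2) c(1) by blast
  \<comment> \<open>\<open>c \<bullet> p\<close> is no farther from the integer \<open>c \<bullet> f\<close> than from \<open>0\<close>\<close>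
  have "\<bar>c \<bullet> p\<bar> \<le> \<bar>c \<bullet> p - c \<bullet> f\<bar>"
  proof (cases "c \<bullet> f = 0")
    case False
    then have "\<bar>c \<bullet> f\<bar> \<ge> 1" using c(2) by (metis Ints_nonzero_abs_ge1)
    then show ?thesis using p[OF c(1)] by linarith
  qed simp
  also have "\<dots> = \<bar>c \<bullet> (p + t *\<^sub>R w - f)\<bar>" using w(2)[OF c(1)] by (simp add: algebra_simps)
  also have "\<dots> \<le> norm c * dist (p + t *\<^sub>R w) f" by (metis Cauchy_Schwarz_ineq2 dist_norm)
  also have "\<dots> < norm c * \<epsilon>" using f(2) \<open>c \<noteq> 0\<close> by simp
  also have "\<dots> \<le> norm c * (\<bar>c \<bullet> p\<bar> / norm c)"
    unfolding \<epsilon>_def using C(1) c(1) by (intro mult_left_mono Min_le) auto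
  also have "\<dots> = \<bar>c \<bullet> p\<bar>" using \<open>c \<noteq> 0\<close> by simp
  finally show False by simp
qed

lemma inner_vector_matrix_left_inverse:
  fixes A M :: "real^'n^'n"
  assumes "A ** M = mat 1"
  shows "(q v* A) \<bullet> (M *v z) = q \<bullet> z"
  using assms by (simp add: dot_lmul_matrix matrix_vector_mul_assoc)

lemma vector_matrix_left_inverse_neq_0:
  fixes A M :: "real^'n^'n"
  assumes "A ** M = mat 1" "q \<noteq> 0"
  shows "q v* A \<noteq> 0"
  using inner_vector_matrix_left_inverse[OF assms(1), of q q] assms(2) by auto

lemma shifted_lattice_subset_int_level_set:
  fixes A M :: "real^'n^'n"
  assumes "A ** M = mat 1" "int_vec q"
  shows "shifted_lattice M 0 \<subseteq> {x. (q v* A) \<bullet> x \<in> \<int>}"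
proof
  fix x assume "x \<in> shifted_lattice M 0"
  then obtain z where "int_vec z" "x = M *v z" by (auto simp: shifted_lattice_def)
  then show "x \<in> {x. (q v* A) \<bullet> x \<in> \<int>}"
    using assms inner_vector_matrix_left_inverse[OF assms(1)]
    by (auto simp: inner_vec_def int_vec_def intro!: Ints_sum Ints_mult)
qed

lemma not_dense_forest_if_common_rat_dependent:
  fixes M :: "nat \<Rightarrow> real^'n^'n" and v :: "nat \<Rightarrow> real^'n"
  assumes "0 < k" and inv: "\<forall>i<k. invertible (M i)"
    and v: "\<forall>i<k. v i \<noteq> 0 \<and> rat_dependent (v i)"
    and common: "\<forall>i<k. \<forall>j<k. M i *v v i = M j *v v j"
  shows "\<not> dense_forest (\<Union>i<k. shifted_lattice (M i) 0)"
proof -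
  have "\<forall>i. \<exists>A. i < k \<longrightarrow> A ** M i = mat 1" using inv by (meson invertible_def)
  then obtain A where A: "\<And>i. i < k \<Longrightarrow> A i ** M i = mat 1" by metis
  have "\<forall>i. \<exists>q. i < k \<longrightarrow> int_vec q \<and> q \<noteq> 0 \<and> q \<bullet> v i = 0"
    using v by (auto simp: rat_dependent_def)
  then obtain q where q: "\<And>i. i < k \<Longrightarrow> int_vec (q i) \<and> q i \<noteq> 0 \<and> q i \<bullet> v i = 0"
    by metis
  define w where "w = M 0 *v v 0"
  have "v 0 = A 0 *v w" using A[OF \<open>0 < k\<close>] by (simp add: w_def matrix_vector_mul_assoc)
  then have "w \<noteq> 0" using v \<open>0 < k\<close> by force
  show ?thesis
  proof (rule not_dense_forest_in_int_level_sets[of "(\<lambda>i. q i v* A i) ` {..<k}" w])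
    show "0 \<notin> (\<lambda>i. q i v* A i) ` {..<k}"
      using vector_matrix_left_inverse_neq_0[OF A] q by (auto simp: image_iff)
    show "c \<bullet> w = 0" if "c \<in> (\<lambda>i. q i v* A i) ` {..<k}" for c
    proof -
      from that obtain i where "i < k" "c = q i v* A i" by blast
      moreover have "w = M i *v v i"
        unfolding w_def using common[rule_format, OF \<open>0 < k\<close> \<open>i < k\<close>] .
      ultimately show ?thesis
        using inner_vector_matrix_left_inverse[OF A[OF \<open>i < k\<close>]] q[OF \<open>i < k\<close>] by simp
    qed
    show "(\<Union>i<k. shifted_lattice (M i) 0) \<subseteq> (\<Union>c\<in>(\<lambda>i. q i v* A i) ` {..<k}. {x. c \<bullet> x \<in> \<int>})"
    proof
      fix x assume "x \<in> (\<Union>i<k. shifted_lattice (M i) 0)"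
      then obtain i where "i < k" "x \<in> shifted_lattice (M i) 0" by blast
      then have "(q i v* A i) \<bullet> x \<in> \<int>"
        using shifted_lattice_subset_int_level_set[OF A[OF \<open>i < k\<close>]] q[OF \<open>i < k\<close>] by blast
      then show "x \<in> (\<Union>c\<in>(\<lambda>i. q i v* A i) ` {..<k}. {x. c \<bullet> x \<in> \<int>})"
        using \<open>i < k\<close> by blast
    qed
  qed (use \<open>w \<noteq> 0\<close> in simp_all)
qed

lemma same_class_refl:
  fixes M :: "nat \<Rightarrow> real^'n^'n"
  shows "same_class k M M"
proof -
  have "invertible (mat 1 :: real^'n^'n)" unfolding invertible_def by (intro exI[of _ "mat 1"]) simp
  moreover have "mat 1 $ i $ j \<in> \<rat>" for i j :: 'n by (simp add: mat_def)
  ultimately have "rat_GL (mat 1 :: real^'n^'n)" unfolding rat_GL_def by blast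
  then show ?thesis
    unfolding same_class_def by (intro allI impI exI[of _ 1] exI[of _ "mat 1"] conjI) auto
qed

theorem theorem1p1:
  fixes M :: "nat \<Rightarrow> real ^ 'n ^ 'n" and k :: nat
  assumes "CARD('n) \<ge> 2" and "k \<ge> 2" and "\<forall>i<k. invertible (M i)"
  shows "(\<not> (\<exists>v :: nat \<Rightarrow> real ^ 'n.
              (\<forall>i<k. v i \<noteq> 0 \<and> rat_dependent (v i)) \<and>
              (\<forall>i<k. \<forall>j<k. M i *v v i = M j *v v j)))
         \<longleftrightarrow>
         (\<forall>(g :: nat \<Rightarrow> real ^ 'n) M'. (\<forall>i<k. invertible (M' i)) \<and> same_class k M' M \<longrightarrow>
              dense_forest (\<Union>i<k. shifted_lattice (M' i) (g i)))"
  (is "\<not> (\<exists>v. ?common v) \<longleftrightarrow> (\<forall>g M'. ?forest g M')")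
proof
  assume none: "\<not> (\<exists>v. ?common v)"
  show "\<forall>g M'. ?forest g M'"
  proof (intro allI impI)
    fix g :: "nat \<Rightarrow> real^'n" and M' assume "(\<forall>i<k. invertible (M' i)) \<and> same_class k M' M"
    then show "dense_forest (\<Union>i<k. shifted_lattice (M' i) (g i))"
      using dense_forest_if_no_common_rat_dependent[OF none] by blast
  qed
next
  assume "\<forall>g M'. ?forest g M'"
  then have forest: "dense_forest (\<Union>i<k. shifted_lattice (M i) 0)"
    using spec[of _ "\<lambda>_. 0"] assms(3) same_class_refl by fast
  show "\<not> (\<exists>v. ?common v)"
  proof
    assume "\<exists>v. ?common v"
    then obtain v where "?common v" by blast
    \<comment> \<open>only \<open>k > 0\<close> is needed; \<open>CARD('n) \<ge> 2\<close> just excludes a case where both sides hold\<close>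
    moreover have "0 < k" using assms(2) by simp
    ultimately show False
      using not_dense_forest_if_common_rat_dependent[OF _ assms(3)] forest by blast
  qed
qed

end
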